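(* There exist series-parallel graphs of girth 6 that do not belong to 2-CBU.
   Context: Let $e_1,e_2$ be the standard basis of $\mathbb{R}^2$. A graph belongs to 2-CBU if one can assign to each vertex an axis-parallel rectangle (product of two closed intervals of positive length) in $\mathbb{R}^2$ such that the rectangles have pairwise disjoint interiors, two distinct vertices are adjacent iff their rectangles intersect, and any two intersecting rectangles intersect in a segment of positive length orthogonal to $e_1$. *)

theory Defs
  imports "HOL-Analysis.Analysis"
begin

definition simple_graph :: "'a set \<Rightarrow> ('a \<Rightarrow> 'a \<Rightarrow> bool) \<Rightarrow> bool" where
  "simple_graph V E \<longleftrightarrow> finite V \<and>
     (\<forall>u v. E u v \<longrightarrow> u \<in> V \<and> v \<in> V \<and> u \<noteq> v \<and> E v u)"

definition is_cycle :: "('a \<Rightarrow> 'a \<Rightarrow> bool) \<Rightarrow> 'a list \<Rightarrow> bool" where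
  "is_cycle E cs \<longleftrightarrow> length cs \<ge> 3 \<and> distinct cs \<and>
     (\<forall>i < length cs. E (cs ! i) (cs ! ((i + 1) mod length cs)))"

definition has_girth :: "('a \<Rightarrow> 'a \<Rightarrow> bool) \<Rightarrow> nat \<Rightarrow> bool" where
  "has_girth E k \<longleftrightarrow> (\<exists>cs. is_cycle E cs \<and> length cs = k) \<and>
     (\<forall>cs. is_cycle E cs \<longrightarrow> k \<le> length cs)"

definition connected_set :: "('a \<Rightarrow> 'a \<Rightarrow> bool) \<Rightarrow> 'a set \<Rightarrow> bool" where
  "connected_set E S \<longleftrightarrow> S \<noteq> {} \<and>
     (\<forall>u\<in>S. \<forall>v\<in>S. (\<lambda>x y. E x y \<and> x \<in> S \<and> y \<in> S)\<^sup>*\<^sup>* u v)"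

definition has_K4_minor :: "'a set \<Rightarrow> ('a \<Rightarrow> 'a \<Rightarrow> bool) \<Rightarrow> bool" where
  "has_K4_minor V E \<longleftrightarrow> (\<exists>B :: nat \<Rightarrow> 'a set.
     (\<forall>i < 4. B i \<subseteq> V \<and> connected_set E (B i)) \<and>
     (\<forall>i < 4. \<forall>j < 4. i \<noteq> j \<longrightarrow> B i \<inter> B j = {} \<and> (\<exists>u \<in> B i. \<exists>v \<in> B j. E u v)))"

definition series_parallel :: "'a set \<Rightarrow> ('a \<Rightarrow> 'a \<Rightarrow> bool) \<Rightarrow> bool" where
  "series_parallel V E \<longleftrightarrow> simple_graph V E \<and> \<not> has_K4_minor V E"

definition is_rect :: "(real \<times> real) set \<Rightarrow> bool" where
  "is_rect R \<longleftrightarrow> (\<exists>a b c d. a < b \<and> c < d \<and> R = {a..b} \<times> {c..d})"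

text \<open>Membership in 2-CBU. Segments orthogonal to e1 are vertical: {x} x [c,d].\<close>
definition in_2CBU :: "'a set \<Rightarrow> ('a \<Rightarrow> 'a \<Rightarrow> bool) \<Rightarrow> bool" where
  "in_2CBU V E \<longleftrightarrow> (\<exists>R :: 'a \<Rightarrow> (real \<times> real) set.
     (\<forall>v \<in> V. is_rect (R v)) \<and>
     (\<forall>u \<in> V. \<forall>v \<in> V. u \<noteq> v \<longrightarrow> interior (R u) \<inter> interior (R v) = {}) \<and>
     (\<forall>u \<in> V. \<forall>v \<in> V. u \<noteq> v \<longrightarrow> (E u v \<longleftrightarrow> R u \<inter> R v \<noteq> {})) \<and>
     (\<forall>u \<in> V. \<forall>v \<in> V. u \<noteq> v \<and> R u \<inter> R v \<noteq> {} \<longrightarrow>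
        (\<exists>x c d. c < d \<and> R u \<inter> R v = {x} \<times> {c..d})))"

end

theory Submission
  imports Defs
begin

text \<open>The graph is a bundle of nine theta graphs, each made of an edge \<open>a b\<close> and three
  \<open>a\<close>-\<open>b\<close> paths with four inner vertices, with all the \<open>a\<close>'s joined to one hub and all the
  \<open>b\<close>'s to another. It is bipartite without 4-cycles, hence of girth 6, and it has no K4 minor:
  two branch sets avoiding both hubs would lie in one theta and use up its two poles, and then
  the branch set containing exactly one hub could not reach both of them.

  In a 2-CBU representation adjacent rectangles abut along vertical segments. Of three
  neighbours glued to the same side of a rectangle, the middle one is walled in by the other
  three rectangles, so all its other contacts are on its far side; call it passing. Hence each
  vertex has at most four non-passing neighbours, and some theta has both its poles passing
  from the hubs. Then \<open>b\<close> is glued to the right of \<open>a\<close>, and for one of the three paths the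
  first edge leaves \<open>a\<close> to the right while the last edge arrives at \<open>b\<close> from the left, so the
  path starts and ends on the same vertical line with both end edges pointing right: its
  middle edge cannot close the gap.\<close>

section \<open>Contact layouts of rectangles\<close>

definition intervals_overlap :: "real \<Rightarrow> real \<Rightarrow> real \<Rightarrow> real \<Rightarrow> bool" where
  "intervals_overlap a b c d \<longleftrightarrow> max a c < min b d"

definition box_contact_layout ::
    "'a set \<Rightarrow> ('a \<Rightarrow> 'a \<Rightarrow> bool) \<Rightarrow> ('a \<Rightarrow> real) \<Rightarrow> ('a \<Rightarrow> real) \<Rightarrow> ('a \<Rightarrow> real) \<Rightarrow> ('a \<Rightarrow> real) \<Rightarrow> bool" where
  "box_contact_layout V E x0 x1 y0 y1 \<longleftrightarrow>
     (\<forall>v\<in>V. x0 v < x1 v \<and> y0 v < y1 v) \<and>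
     (\<forall>u v. E u v \<longrightarrow> (x0 v = x1 u \<or> x1 v = x0 u) \<and> intervals_overlap (y0 u) (y1 u) (y0 v) (y1 v)) \<and>
     (\<forall>u\<in>V. \<forall>v\<in>V. u \<noteq> v \<longrightarrow>
        \<not> (intervals_overlap (x0 u) (x1 u) (x0 v) (x1 v) \<and> intervals_overlap (y0 u) (y1 u) (y0 v) (y1 v)))"

lemma rectangle_coordinates:
  assumes "\<forall>v\<in>V. is_rect (R v)"
  obtains x0 x1 y0 y1 :: "'a \<Rightarrow> real"
  where "\<forall>v\<in>V. x0 v < x1 v \<and> y0 v < y1 v \<and> R v = {x0 v..x1 v} \<times> {y0 v..y1 v}"
proof -
  have "\<forall>v\<in>V. \<exists>r :: (real \<times> real) \<times> (real \<times> real).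
          fst (fst r) < snd (fst r) \<and> fst (snd r) < snd (snd r) \<and>
          R v = {fst (fst r)..snd (fst r)} \<times> {fst (snd r)..snd (snd r)}"
    using assms unfolding is_rect_def by fastforce
  then obtain r where "\<forall>v\<in>V. fst (fst (r v)) < snd (fst (r v)) \<and> fst (snd (r v)) < snd (snd (r v)) \<and>
          R v = {fst (fst (r v))..snd (fst (r v))} \<times> {fst (snd (r v))..snd (snd (r v))}"
    by metis
  then show thesis by (rule that)
qed

lemma rectangles_touch_vertically:
  fixes a b c d a' b' c' d' x e f :: real
  assumes "a < b" "a' < b'" "e < f"
    and touch: "({a..b} \<times> {c..d}) \<inter> ({a'..b'} \<times> {c'..d'}) = {x} \<times> {e..f}"
  shows "(a' = b \<or> b' = a) \<and> intervals_overlap c d c' d'"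
proof -
  have "(x, e) \<in> ({a..b} \<times> {c..d}) \<inter> ({a'..b'} \<times> {c'..d'})"
    "(x, f) \<in> ({a..b} \<times> {c..d}) \<inter> ({a'..b'} \<times> {c'..d'})"
    using touch \<open>e < f\<close> by auto
  then have hx: "max a a' \<le> x" "x \<le> min b b'" and hy: "max c c' \<le> e" "f \<le> min d d'"
    by auto
  have "a' = b \<or> b' = a"
  proof (rule ccontr)
    assume "\<not> (a' = b \<or> b' = a)"
    then have lt: "max a a' < min b b'" using hx assms(1,2) by (auto simp: max_def min_def)
    have "(max a a', e) \<in> ({a..b} \<times> {c..d}) \<inter> ({a'..b'} \<times> {c'..d'})"
      "(min b b', e) \<in> ({a..b} \<times> {c..d}) \<inter> ({a'..b'} \<times> {c'..d'})"
      using hx hy \<open>e < f\<close> lt by auto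
    then have "max a a' = x" "min b b' = x" unfolding touch by auto
    with lt show False by simp
  qed
  then show ?thesis using hy \<open>e < f\<close> unfolding intervals_overlap_def by simp
qed

lemma overlapping_rectangles_interiors:
  fixes a b c d a' b' c' d' :: real
  assumes "intervals_overlap a b a' b'" "intervals_overlap c d c' d'"
  shows "interior ({a..b} \<times> {c..d}) \<inter> interior ({a'..b'} \<times> {c'..d'}) \<noteq> {}"
proof -
  let ?p = "((max a a' + min b b') / 2, (max c c' + min d d') / 2)"
  have "?p \<in> interior ({a..b} \<times> {c..d}) \<inter> interior ({a'..b'} \<times> {c'..d'})"
    using assms by (auto simp: intervals_overlap_def interior_Times max_def min_def)
  then show ?thesis by blast
qed

lemma in_2CBU_box_contact_layout:
  assumes G: "simple_graph V E" and "in_2CBU V E"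
  obtains x0 x1 y0 y1 where "box_contact_layout V E x0 x1 y0 y1"
proof -
  obtain R where rect: "\<forall>v\<in>V. is_rect (R v)"
    and disj: "\<forall>u\<in>V. \<forall>v\<in>V. u \<noteq> v \<longrightarrow> interior (R u) \<inter> interior (R v) = {}"
    and adj: "\<forall>u\<in>V. \<forall>v\<in>V. u \<noteq> v \<longrightarrow> (E u v \<longleftrightarrow> R u \<inter> R v \<noteq> {})"
    and seg: "\<forall>u\<in>V. \<forall>v\<in>V. u \<noteq> v \<and> R u \<inter> R v \<noteq> {} \<longrightarrow>
                (\<exists>x c d. c < d \<and> R u \<inter> R v = {x} \<times> {c..d})"
    using \<open>in_2CBU V E\<close> unfolding in_2CBU_def by (elim exE conjE) (rule that)
  obtain x0 x1 y0 y1 where R: "\<forall>v\<in>V. x0 v < x1 v \<and> y0 v < y1 v \<and> R v = {x0 v..x1 v} \<times> {y0 v..y1 v}"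
    by (rule rectangle_coordinates[OF rect])
  have pos: "\<forall>v\<in>V. x0 v < x1 v \<and> y0 v < y1 v" using R by blast
  have touch: "(x0 v = x1 u \<or> x1 v = x0 u) \<and> intervals_overlap (y0 u) (y1 u) (y0 v) (y1 v)"
    if "E u v" for u v
  proof -
    have uv: "u \<in> V" "v \<in> V" "u \<noteq> v" using G that unfolding simple_graph_def by auto
    then have "R u \<inter> R v \<noteq> {}" using adj that by blast
    then obtain x c d where "c < d" and meet: "R u \<inter> R v = {x} \<times> {c..d}" using seg uv by blast
    have "x0 u < x1 u" "x0 v < x1 v"
      and "({x0 u..x1 u} \<times> {y0 u..y1 u}) \<inter> ({x0 v..x1 v} \<times> {y0 v..y1 v}) = {x} \<times> {c..d}"
      using R uv meet by auto
    then show ?thesis by (rule rectangles_touch_vertically[OF _ _ \<open>c < d\<close>])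
  qed
  have apart: "\<not> (intervals_overlap (x0 u) (x1 u) (x0 v) (x1 v) \<and> intervals_overlap (y0 u) (y1 u) (y0 v) (y1 v))"
    if "u \<in> V" "v \<in> V" "u \<noteq> v" for u v
  proof -
    have "interior (R u) \<inter> interior (R v) = {}" using disj that by blast
    moreover have "R u = {x0 u..x1 u} \<times> {y0 u..y1 u}" "R v = {x0 v..x1 v} \<times> {y0 v..y1 v}"
      using R that by auto
    ultimately show ?thesis using overlapping_rectangles_interiors by metis
  qed
  have "box_contact_layout V E x0 x1 y0 y1"
    unfolding box_contact_layout_def using pos touch apart by blast
  then show thesis by (rule that)
qed

definition passes_right :: "('a \<Rightarrow> 'a \<Rightarrow> bool) \<Rightarrow> ('a \<Rightarrow> real) \<Rightarrow> ('a \<Rightarrow> real) \<Rightarrow> 'a \<Rightarrow> 'a \<Rightarrow> bool" where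
  "passes_right E x0 x1 u v \<longleftrightarrow> x0 v = x1 u \<and> (\<forall>w. E v w \<longrightarrow> w \<noteq> u \<longrightarrow> x0 w = x1 v)"

abbreviation passes_left :: "('a \<Rightarrow> 'a \<Rightarrow> bool) \<Rightarrow> ('a \<Rightarrow> real) \<Rightarrow> ('a \<Rightarrow> real) \<Rightarrow> 'a \<Rightarrow> 'a \<Rightarrow> bool" where
  "passes_left E x0 x1 \<equiv> passes_right E (\<lambda>v. - x1 v) (\<lambda>v. - x0 v)"

lemma passes_left_iff:
  "passes_left E x0 x1 u v \<longleftrightarrow> x1 v = x0 u \<and> (\<forall>w. E v w \<longrightarrow> w \<noteq> u \<longrightarrow> x1 w = x0 v)"
  by (simp add: passes_right_def)

lemma passes_left_mirror:
  "passes_left E (\<lambda>v. - x1 v) (\<lambda>v. - x0 v) u v \<longleftrightarrow> passes_right E x0 x1 u v"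
  by simp

definition glued_triples_pass :: "('a \<Rightarrow> 'a \<Rightarrow> bool) \<Rightarrow> ('a \<Rightarrow> real) \<Rightarrow> ('a \<Rightarrow> real) \<Rightarrow> bool" where
  "glued_triples_pass E x0 x1 \<longleftrightarrow>
     (\<forall>u v1 v2 v3. E u v1 \<and> E u v2 \<and> E u v3 \<and> distinct [v1, v2, v3] \<and>
        x0 v1 = x1 u \<and> x0 v2 = x1 u \<and> x0 v3 = x1 u \<longrightarrow>
        passes_right E x0 x1 u v1 \<or> passes_right E x0 x1 u v2 \<or> passes_right E x0 x1 u v3)"

lemma glued_triples_passD:
  assumes "glued_triples_pass E x0 x1" "E u v1" "E u v2" "E u v3" "distinct [v1, v2, v3]"
    "x0 v1 = x1 u" "x0 v2 = x1 u" "x0 v3 = x1 u"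
  shows "passes_right E x0 x1 u v1 \<or> passes_right E x0 x1 u v2 \<or> passes_right E x0 x1 u v3"
  using assms unfolding glued_triples_pass_def by blast

definition x_contact_layout :: "'a set \<Rightarrow> ('a \<Rightarrow> 'a \<Rightarrow> bool) \<Rightarrow> ('a \<Rightarrow> real) \<Rightarrow> ('a \<Rightarrow> real) \<Rightarrow> bool" where
  "x_contact_layout V E x0 x1 \<longleftrightarrow>
     (\<forall>v\<in>V. x0 v < x1 v) \<and> (\<forall>u v. E u v \<longrightarrow> x0 v = x1 u \<or> x1 v = x0 u) \<and>
     glued_triples_pass E x0 x1 \<and> glued_triples_pass E (\<lambda>v. - x1 v) (\<lambda>v. - x0 v)"

lemma x_contact_layout_mirror:
  assumes "x_contact_layout V E x0 x1"
  shows "x_contact_layout V E (\<lambda>v. - x1 v) (\<lambda>v. - x0 v)"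
  using assms unfolding x_contact_layout_def by auto

lemma intervals_overlap_mirror:
  "intervals_overlap (- b) (- a) (- d) (- c) \<longleftrightarrow> intervals_overlap a b c d"
  by (auto simp: intervals_overlap_def max_def min_def)

lemma box_contact_layout_mirror:
  assumes "box_contact_layout V E x0 x1 y0 y1"
  shows "box_contact_layout V E (\<lambda>v. - x1 v) (\<lambda>v. - x0 v) y0 y1"
  using assms unfolding box_contact_layout_def intervals_overlap_mirror by auto

lemma box_contact_layout_middle_passes:
  assumes G: "simple_graph V E" and L: "box_contact_layout V E x0 x1 y0 y1"
    and nbrs: "E u l" "E u m" "E u h" and glued: "x0 m = x1 u"
    and below: "y1 l \<le> y0 m" and above: "y1 m \<le> y0 h"
  shows "passes_right E x0 x1 u m"
  unfolding passes_right_def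
proof (intro conjI allI impI)
  show "x0 m = x1 u" by (fact glued)
  fix w assume "E m w" "w \<noteq> u"
  have "u \<in> V" "w \<in> V" using G nbrs \<open>E m w\<close> unfolding simple_graph_def by auto
  from L have pos: "x0 u < x1 u" "x0 w < x1 w" and touch: "\<And>p q. E p q \<Longrightarrow>
      (x0 q = x1 p \<or> x1 q = x0 p) \<and> intervals_overlap (y0 p) (y1 p) (y0 q) (y1 q)"
    and apart: "\<not> (intervals_overlap (x0 u) (x1 u) (x0 w) (x1 w) \<and> intervals_overlap (y0 u) (y1 u) (y0 w) (y1 w))"
    using \<open>u \<in> V\<close> \<open>w \<in> V\<close> \<open>w \<noteq> u\<close> unfolding box_contact_layout_def by auto
  show "x0 w = x1 m"
  proof (rule ccontr)
    assume "x0 w \<noteq> x1 m"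
    with touch[OF \<open>E m w\<close>] have "x1 w = x1 u" "intervals_overlap (y0 m) (y1 m) (y0 w) (y1 w)"
      using glued by auto
    moreover have "intervals_overlap (y0 u) (y1 u) (y0 l) (y1 l)" "intervals_overlap (y0 u) (y1 u) (y0 h) (y1 h)"
      using touch nbrs by auto
    ultimately show False using apart pos below above
      unfolding intervals_overlap_def by (auto simp: max_def min_def split: if_splits)
  qed
qed

lemma three_separated_intervals_middle:
  fixes lo hi :: "'a \<Rightarrow> real"
  assumes "lo p < hi p" "lo q < hi q" "lo r < hi r"
    and "hi p \<le> lo q \<or> hi q \<le> lo p" "hi p \<le> lo r \<or> hi r \<le> lo p" "hi q \<le> lo r \<or> hi r \<le> lo q"
  shows "\<exists>l\<in>{p, q, r}. \<exists>m\<in>{p, q, r}. \<exists>h\<in>{p, q, r}. hi l \<le> lo m \<and> hi m \<le> lo h"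
proof -
  have "(hi p \<le> lo q \<and> hi q \<le> lo r) \<or> (hi r \<le> lo q \<and> hi q \<le> lo p) \<or>
      (hi q \<le> lo p \<and> hi p \<le> lo r) \<or> (hi r \<le> lo p \<and> hi p \<le> lo q) \<or>
      (hi p \<le> lo r \<and> hi r \<le> lo q) \<or> (hi q \<le> lo r \<and> hi r \<le> lo p)"
    using assms by linarith
  then show ?thesis by blast
qed

lemma box_contact_layout_glued_triples_pass:
  assumes G: "simple_graph V E" and L: "box_contact_layout V E x0 x1 y0 y1"
  shows "glued_triples_pass E x0 x1"
  unfolding glued_triples_pass_def
proof (intro allI impI, elim conjE)
  fix u v1 v2 v3
  assume nbrs: "E u v1" "E u v2" "E u v3" and "distinct [v1, v2, v3]"
    and glued: "x0 v1 = x1 u" "x0 v2 = x1 u" "x0 v3 = x1 u"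
  let ?N = "{v1, v2, v3}"
  have in_V: "v \<in> V" if "v \<in> ?N" for v
    using G nbrs that unfolding simple_graph_def by auto
  have pos: "x0 v < x1 v" "y0 v < y1 v" if "v \<in> ?N" for v
    using L in_V[OF that] unfolding box_contact_layout_def by auto
  have separated: "y1 p \<le> y0 q \<or> y1 q \<le> y0 p" if "p \<in> ?N" "q \<in> ?N" "p \<noteq> q" for p q
  proof -
    \<comment> \<open>both x-intervals start at the right side of u, so the rectangles are stacked vertically\<close>
    have "x0 p = x1 u" "x0 q = x1 u" using that glued by auto
    then have "intervals_overlap (x0 p) (x1 p) (x0 q) (x1 q)"
      using pos(1)[OF that(1)] pos(1)[OF that(2)] unfolding intervals_overlap_def by simp
    then have "\<not> intervals_overlap (y0 p) (y1 p) (y0 q) (y1 q)"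
      using L in_V that unfolding box_contact_layout_def by blast
    then show ?thesis using pos[OF that(1)] pos[OF that(2)]
      unfolding intervals_overlap_def by (auto simp: max_def min_def split: if_splits)
  qed
  obtain l m h where "l \<in> ?N" "m \<in> ?N" "h \<in> ?N" "y1 l \<le> y0 m" "y1 m \<le> y0 h"
    using three_separated_intervals_middle[of y0 v1 y1 v2 v3] pos separated \<open>distinct [v1, v2, v3]\<close>
    by auto
  then have "passes_right E x0 x1 u m"
    using box_contact_layout_middle_passes[OF G L] nbrs glued by blast
  then show "passes_right E x0 x1 u v1 \<or> passes_right E x0 x1 u v2 \<or> passes_right E x0 x1 u v3"
    using \<open>m \<in> ?N\<close> by blast
qed

lemma in_2CBU_x_contact_layout:
  assumes G: "simple_graph V E" and "in_2CBU V E"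
  obtains x0 x1 where "x_contact_layout V E x0 x1"
proof -
  obtain x0 x1 y0 y1 where L: "box_contact_layout V E x0 x1 y0 y1"
    using in_2CBU_box_contact_layout[OF assms] by blast
  have "x_contact_layout V E x0 x1"
    unfolding x_contact_layout_def
    using L box_contact_layout_glued_triples_pass[OF G L]
      box_contact_layout_glued_triples_pass[OF G box_contact_layout_mirror[OF L]]
    by (auto simp: box_contact_layout_def)
  then show thesis by (rule that)
qed

section \<open>Passing neighbours and hanging thetas\<close>

lemma card_le_2_if_no_distinct_triple:
  assumes "finite A" and no_triple: "\<And>x y z. x \<in> A \<Longrightarrow> y \<in> A \<Longrightarrow> z \<in> A \<Longrightarrow> distinct [x, y, z] \<Longrightarrow> False"
  shows "card A \<le> 2"
proof (rule ccontr)
  assume "\<not> card A \<le> 2"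
  then obtain T where "T \<subseteq> A" "card T = 3"
    by (metis obtain_subset_with_card_n not_less_eq_eq numeral_2_eq_2 numeral_3_eq_3)
  then obtain x y z where "T = {x, y, z}" "x \<noteq> y" "y \<noteq> z" "x \<noteq> z"
    unfolding card_3_iff by blast
  then show False using no_triple \<open>T \<subseteq> A\<close> by auto
qed

lemma glued_non_passing_card:
  assumes G: "simple_graph V E" and P: "glued_triples_pass E x0 x1"
  shows "card {v. E u v \<and> x0 v = x1 u \<and> \<not> passes_right E x0 x1 u v} \<le> 2"
proof (rule card_le_2_if_no_distinct_triple)
  show "finite {v. E u v \<and> x0 v = x1 u \<and> \<not> passes_right E x0 x1 u v}"
    using G unfolding simple_graph_def by (auto intro: finite_subset)
qed (use P in \<open>auto simp: glued_triples_pass_def\<close>)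

lemma non_passing_neighbours_card:
  assumes G: "simple_graph V E" and L: "x_contact_layout V E x0 x1"
  shows "card {v. E u v \<and> \<not> passes_right E x0 x1 u v \<and> \<not> passes_left E x0 x1 u v} \<le> 4"
proof -
  let ?R = "{v. E u v \<and> x0 v = x1 u \<and> \<not> passes_right E x0 x1 u v}"
  let ?L = "{v. E u v \<and> - x1 v = - x0 u \<and> \<not> passes_left E x0 x1 u v}"
  have "card ?R \<le> 2" "card ?L \<le> 2"
    using glued_non_passing_card[OF G] L unfolding x_contact_layout_def by blast+
  have "finite (?R \<union> ?L)"
    using G unfolding simple_graph_def by (auto intro: finite_subset)
  moreover have "{v. E u v \<and> \<not> passes_right E x0 x1 u v \<and> \<not> passes_left E x0 x1 u v} \<subseteq> ?R \<union> ?L"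
    using L unfolding x_contact_layout_def by auto
  ultimately have "card {v. E u v \<and> \<not> passes_right E x0 x1 u v \<and> \<not> passes_left E x0 x1 u v}
      \<le> card (?R \<union> ?L)" by (rule card_mono)
  also have "\<dots> \<le> card ?R + card ?L" by (rule card_Un_le)
  finally show ?thesis using \<open>card ?R \<le> 2\<close> \<open>card ?L \<le> 2\<close> by linarith
qed

definition hanging_theta :: "('a \<Rightarrow> 'a \<Rightarrow> bool) \<Rightarrow> 'a \<Rightarrow> 'a \<Rightarrow> 'a \<Rightarrow> 'a \<Rightarrow> (nat \<Rightarrow> nat \<Rightarrow> 'a) \<Rightarrow> bool" where
  "hanging_theta E s t a b p \<longleftrightarrow>
     distinct [s, t, a, b] \<and>
     (\<forall>j<3. \<forall>k<4. \<forall>j'<3. \<forall>k'<4. p j k = p j' k' \<longrightarrow> j = j' \<and> k = k') \<and>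
     (\<forall>j<3. \<forall>k<4. p j k \<notin> {s, t, a, b}) \<and>
     E s a \<and> E t b \<and> E a b \<and>
     (\<forall>j<3. E a (p j 0) \<and> E (p j 0) (p j 1) \<and> E (p j 1) (p j 2) \<and> E (p j 2) (p j 3) \<and> E (p j 3) b)"

lemma hanging_thetaD:
  assumes "hanging_theta E s t a b p"
  shows "distinct [s, t, a, b]" "E s a" "E t b" "E a b"
    and "\<And>j j' k. j < 3 \<Longrightarrow> j' < 3 \<Longrightarrow> k < 4 \<Longrightarrow> p j k = p j' k \<Longrightarrow> j = j'"
    and "\<And>j k. j < 3 \<Longrightarrow> k < 4 \<Longrightarrow> p j k \<notin> {s, t, a, b}"
    and "\<And>j. j < 3 \<Longrightarrow> E a (p j 0)" "\<And>j. j < 3 \<Longrightarrow> E (p j 0) (p j 1)"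
      "\<And>j. j < 3 \<Longrightarrow> E (p j 1) (p j 2)" "\<And>j. j < 3 \<Longrightarrow> E (p j 2) (p j 3)"
      "\<And>j. j < 3 \<Longrightarrow> E (p j 3) b"
  using assms unfolding hanging_theta_def by blast+

lemma simple_graph_sym: "simple_graph V E \<Longrightarrow> E u v \<Longrightarrow> E v u"
  unfolding simple_graph_def by blast

lemma x_contact_layout_nbr_pos: "simple_graph V E \<Longrightarrow> x_contact_layout V E x0 x1 \<Longrightarrow> E u v \<Longrightarrow> x0 v < x1 v"
  unfolding simple_graph_def x_contact_layout_def by blast

lemma x_contact_layout_touch: "x_contact_layout V E x0 x1 \<Longrightarrow> E u v \<Longrightarrow> x0 v = x1 u \<or> x1 v = x0 u"
  unfolding x_contact_layout_def by blast

lemma hanging_theta_ends_glued: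
  assumes G: "simple_graph V E" and L: "x_contact_layout V E x0 x1" and T: "hanging_theta E s t a b p"
    and sa: "passes_right E x0 x1 s a" and tb: "passes_right E x0 x1 t b \<or> passes_left E x0 x1 t b"
  shows "x0 b = x1 a" and "\<And>j. j < 3 \<Longrightarrow> x0 (p j 0) = x1 a" and "\<And>j. j < 3 \<Longrightarrow> x1 (p j 3) = x0 b"
    and "\<not> passes_right E x0 x1 a b" and "\<not> passes_left E x0 x1 b a"
proof -
  note sym = simple_graph_sym[OF G] and pos = x_contact_layout_nbr_pos[OF G L] and theta = hanging_thetaD[OF T]
  have right_of_a: "x0 w = x1 a" if "E a w" "w \<noteq> s" for w
    using sa that unfolding passes_right_def by blast
  show ab: "x0 b = x1 a" using right_of_a theta(1,4) by auto
  show p0: "x0 (p j 0) = x1 a" if "j < 3" for j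
    using right_of_a theta(6,7)[OF that] by simp
  have "passes_left E x0 x1 t b"
  proof (rule ccontr)
    assume "\<not> passes_left E x0 x1 t b"
    then have "x0 a = x1 b" using tb sym[OF theta(4)] theta(1) unfolding passes_right_def by auto
    then show False using ab pos[OF theta(4)] pos[OF sym[OF theta(4)]] by linarith
  qed
  then show p3: "x1 (p j 3) = x0 b" if "j < 3" for j
    using sym theta(11)[OF that] theta(6)[OF that] unfolding passes_left_iff by simp
  show "\<not> passes_right E x0 x1 a b"
  proof
    assume "passes_right E x0 x1 a b"
    moreover have "E b (p 0 3)" using sym theta(11)[of 0] by simp
    ultimately have "x0 (p 0 3) = x1 b" using theta(6)[of 0 3] unfolding passes_right_def by simp
    then show False using p3[of 0] pos[OF theta(4)] pos[OF \<open>E b (p 0 3)\<close>] by simp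
  qed
  show "\<not> passes_left E x0 x1 b a"
  proof
    assume "passes_left E x0 x1 b a"
    moreover have "E a (p 0 0)" using theta(7)[of 0] by simp
    ultimately have "x1 (p 0 0) = x0 a" using theta(6)[of 0 0] unfolding passes_left_iff by simp
    then show False using p0[of 0] pos[OF sym[OF theta(4)]] pos[OF \<open>E a (p 0 0)\<close>] by simp
  qed
qed

lemma hanging_theta_path_passes:
  assumes G: "simple_graph V E" and L: "x_contact_layout V E x0 x1" and T: "hanging_theta E s t a b p"
    and sa: "passes_right E x0 x1 s a" and tb: "passes_right E x0 x1 t b \<or> passes_left E x0 x1 t b"
  obtains j where "j < 3" "passes_right E x0 x1 a (p j 0)" "passes_left E x0 x1 b (p j 3)" "x0 b = x1 a"
proof -
  note sym = simple_graph_sym[OF G] and theta = hanging_thetaD[OF T]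
    and glued = hanging_theta_ends_glued[OF assms]
  have triples_right: "glued_triples_pass E x0 x1"
    and triples_left: "glued_triples_pass E (\<lambda>v. - x1 v) (\<lambda>v. - x0 v)"
    using L unfolding x_contact_layout_def by blast+
  \<comment> \<open>the middle one of \<open>b\<close>, \<open>p j 0\<close>, \<open>p k 0\<close> on the right side of \<open>a\<close> passes; it is not \<open>b\<close>\<close>
  have two_right: "passes_right E x0 x1 a (p j 0) \<or> passes_right E x0 x1 a (p k 0)"
    if "j < 3" "k < 3" "j \<noteq> k" for j k
  proof -
    have "distinct [b, p j 0, p k 0]" using theta(6)[of _ 0] theta(5)[of j k 0] that by auto
    then show ?thesis
      using glued_triples_passD[OF triples_right theta(4) theta(7)[OF that(1)] theta(7)[OF that(2)]]
        glued(1,2,4) that by blast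
  qed
  have two_left: "passes_left E x0 x1 b (p j 3) \<or> passes_left E x0 x1 b (p k 3)"
    if "j < 3" "k < 3" "j \<noteq> k" for j k
  proof -
    have "E b (p j 3)" "E b (p k 3)" using theta(11) that sym by blast+
    moreover have "distinct [a, p j 3, p k 3]" using theta(6)[of _ 3] theta(5)[of j k 3] that by auto
    moreover have "- x1 a = - x0 b" "- x1 (p j 3) = - x0 b" "- x1 (p k 3) = - x0 b"
      using glued(1,3) that by auto
    ultimately show ?thesis
      using glued_triples_passD[OF triples_left sym[OF theta(4)]] glued(5) by blast
  qed
  have "(passes_right E x0 x1 a (p 0 0) \<and> passes_left E x0 x1 b (p 0 3)) \<or>
      (passes_right E x0 x1 a (p 1 0) \<and> passes_left E x0 x1 b (p 1 3)) \<or>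
      (passes_right E x0 x1 a (p 2 0) \<and> passes_left E x0 x1 b (p 2 3))"
    using two_right[of 0 1] two_right[of 0 2] two_right[of 1 2]
      two_left[of 0 1] two_left[of 0 2] two_left[of 1 2] by auto
  then show thesis using that[of 0] that[of 1] that[of 2] glued(1) by auto
qed

lemma hanging_theta_right_pass_impossible:
  assumes G: "simple_graph V E" and L: "x_contact_layout V E x0 x1" and T: "hanging_theta E s t a b p"
    and "passes_right E x0 x1 s a" and "passes_right E x0 x1 t b \<or> passes_left E x0 x1 t b"
  shows False
proof -
  obtain j where "j < 3" and right: "passes_right E x0 x1 a (p j 0)"
    and left: "passes_left E x0 x1 b (p j 3)" and ab: "x0 b = x1 a"
    using hanging_theta_path_passes[OF assms] .
  note theta = hanging_thetaD[OF T] and pos = x_contact_layout_nbr_pos[OF G L]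
  have path: "E a (p j 0)" "E (p j 0) (p j 1)" "E (p j 1) (p j 2)" "E (p j 2) (p j 3)"
    using theta(7-10) \<open>j < 3\<close> by blast+
  have "p j 1 \<noteq> a" "p j 2 \<noteq> b" using theta(6)[OF \<open>j < 3\<close>, of 1] theta(6)[OF \<open>j < 3\<close>, of 2] by auto
  \<comment> \<open>The path starts and ends on the vertical line through the right side of \<open>a\<close>: it leaves
    to the right and arrives from the left, and both its first and last edge go to the right.
    So \<open>p j 1\<close> lies right of that line and \<open>p j 2\<close> left of it, and they cannot touch.\<close>
  have "x0 (p j 1) = x1 (p j 0)"
    using right path(2) \<open>p j 1 \<noteq> a\<close> unfolding passes_right_def by blast
  moreover have "x1 (p j 2) = x0 (p j 3)"
    using left simple_graph_sym[OF G path(4)] \<open>p j 2 \<noteq> b\<close> unfolding passes_left_iff by blast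
  moreover have "x0 (p j 0) = x1 a" using right unfolding passes_right_def by blast
  moreover have "x1 (p j 3) = x0 b" using left unfolding passes_left_iff by blast
  moreover have "x0 (p j 2) = x1 (p j 1) \<or> x1 (p j 2) = x0 (p j 1)"
    using x_contact_layout_touch[OF L path(3)] .
  ultimately show False
    using ab pos[OF path(1)] pos[OF path(2)] pos[OF path(3)] pos[OF path(4)] by linarith
qed

lemma hanging_theta_pass_impossible:
  assumes G: "simple_graph V E" and L: "x_contact_layout V E x0 x1" and T: "hanging_theta E s t a b p"
    and sa: "passes_right E x0 x1 s a \<or> passes_left E x0 x1 s a"
    and tb: "passes_right E x0 x1 t b \<or> passes_left E x0 x1 t b"
  shows False
  using sa
proof
  assume "passes_right E x0 x1 s a"
  then show False using hanging_theta_right_pass_impossible[OF G L T _ tb] by blast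
next
  assume "passes_left E x0 x1 s a"
  moreover have "passes_right E (\<lambda>v. - x1 v) (\<lambda>v. - x0 v) t b \<or>
      passes_left E (\<lambda>v. - x1 v) (\<lambda>v. - x0 v) t b"
    using tb unfolding passes_left_mirror by blast
  ultimately show False
    using hanging_theta_right_pass_impossible[OF G x_contact_layout_mirror[OF L] T] by blast
qed

section \<open>Connected sets, cycles and counting\<close>

lemma connected_set_nonempty: "connected_set E C \<Longrightarrow> C \<noteq> {}"
  unfolding connected_set_def by blast

lemma connected_set_disjoint:
  assumes C: "connected_set E C" and "x \<in> C" "x \<notin> S"
    and no_entry: "\<And>u v. E u v \<Longrightarrow> u \<notin> S \<Longrightarrow> v \<in> S \<Longrightarrow> v \<notin> C"
  shows "C \<inter> S = {}"
proof -
  have "y \<notin> S" if "y \<in> C" for y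
  proof -
    from C \<open>x \<in> C\<close> that have "(\<lambda>u v. E u v \<and> u \<in> C \<and> v \<in> C)\<^sup>*\<^sup>* x y"
      unfolding connected_set_def by blast
    then show ?thesis
      by (induction rule: rtranclp_induct) (use \<open>x \<notin> S\<close> no_entry in blast)+
  qed
  then show ?thesis by blast
qed

lemma cycle_even_if_two_coloured:
  fixes col :: "'a \<Rightarrow> bool"
  assumes cyc: "is_cycle E cs" and colour: "\<And>u v. E u v \<Longrightarrow> col u \<noteq> col v"
  shows "even (length cs)"
proof -
  let ?n = "length cs"
  have n: "3 \<le> ?n" and step: "\<And>i. i < ?n \<Longrightarrow> E (cs ! i) (cs ! ((i + 1) mod ?n))"
    using cyc unfolding is_cycle_def by auto
  have alternate: "col (cs ! i) = (col (cs ! 0) \<longleftrightarrow> even i)" if "i < ?n" for i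
    using that
  proof (induction i)
    case (Suc i)
    then have "E (cs ! i) (cs ! Suc i)" using step[of i] by simp
    then have "col (cs ! i) \<noteq> col (cs ! Suc i)" by (rule colour)
    then show ?case using Suc by auto
  qed simp
  have "Suc (?n - 1) = ?n" using n by simp
  then have "E (cs ! (?n - 1)) (cs ! 0)" using step[of "?n - 1"] n by simp
  then have "col (cs ! (?n - 1)) \<noteq> col (cs ! 0)" by (rule colour)
  moreover have "?n - 1 < ?n" using n by simp
  ultimately have "odd (?n - 1)" using alternate by auto
  then show ?thesis using n by simp
qed

lemma cycle_length_ge_6:
  fixes col :: "'a \<Rightarrow> bool"
  assumes cyc: "is_cycle E cs" and colour: "\<And>u v. E u v \<Longrightarrow> col u \<noteq> col v"
    and no_square: "\<And>w x y z. E w x \<Longrightarrow> E x y \<Longrightarrow> E y z \<Longrightarrow> E z w \<Longrightarrow> w = y \<or> x = z"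
  shows "6 \<le> length cs"
proof -
  let ?n = "length cs"
  have "3 \<le> ?n" "distinct cs" and step: "\<And>i. i < ?n \<Longrightarrow> E (cs ! i) (cs ! ((i + 1) mod ?n))"
    using cyc unfolding is_cycle_def by auto
  have "even ?n" using cycle_even_if_two_coloured[OF cyc colour] .
  then have "?n \<noteq> 3" "?n \<noteq> 5" by auto
  moreover have "?n \<noteq> 4"
  proof
    assume "?n = 4"
    then obtain w x y z where cs: "cs = [w, x, y, z]"
      by (auto simp: numeral_eq_Suc length_Suc_conv)
    then have "E w x" "E x y" "E y z" "E z w"
      using step[of 0] step[of 1] step[of 2] step[of 3] by simp_all
    moreover have "w \<noteq> y" "x \<noteq> z" using \<open>distinct cs\<close> cs by auto
    ultimately show False using no_square by blast
  qed
  ultimately show ?thesis using \<open>3 \<le> ?n\<close> by linarith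
qed

lemma exists_outside_two_small_sets:
  assumes "card {i. i < n \<and> P i} + card {i. i < n \<and> Q i} < n"
  shows "\<exists>i<n. \<not> P i \<and> \<not> Q i"
proof (rule ccontr)
  assume "\<not> (\<exists>i<n. \<not> P i \<and> \<not> Q i)"
  then have "{..<n} \<subseteq> {i. i < n \<and> P i} \<union> {i. i < n \<and> Q i}" by auto
  moreover have "finite ({i. i < n \<and> P i} \<union> {i. i < n \<and> Q i})" by simp
  ultimately have "card {..<n} \<le> card ({i. i < n \<and> P i} \<union> {i. i < n \<and> Q i})"
    by (intro card_mono)
  then have "n \<le> card ({i. i < n \<and> P i} \<union> {i. i < n \<and> Q i})" by simp
  also have "\<dots> \<le> card {i. i < n \<and> P i} + card {i. i < n \<and> Q i}" by (rule card_Un_le)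
  finally show False using assms by linarith
qed

lemma obtain_indices_outside:
  fixes F :: "nat set"
  assumes "finite F" "card F + n \<le> N"
  obtains T where "T \<subseteq> {..<N} - F" "card T = n"
proof -
  have "card {..<N} - card F \<le> card ({..<N} - F)" using assms(1) by (rule diff_card_le_card_Diff)
  then have "n \<le> card ({..<N} - F)" using assms(2) by simp
  then show thesis using obtain_subset_with_card_n that by metis
qed

lemma list_all_uptD: "list_all P [0..<n] \<Longrightarrow> x < n \<Longrightarrow> P x"
  by (simp add: list_all_iff)

section \<open>A bundle of nine hanging thetas\<close>

text \<open>The graph is given by neighbour lists so that finite checks can be decided by evaluation.\<close>

abbreviation hub_a :: nat where "hub_a \<equiv> 108"
abbreviation hub_b :: nat where "hub_b \<equiv> 109"
abbreviation pole_a :: "nat \<Rightarrow> nat" where "pole_a i \<equiv> 110 + i"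
abbreviation pole_b :: "nat \<Rightarrow> nat" where "pole_b i \<equiv> 119 + i"
abbreviation path_vertex :: "nat \<Rightarrow> nat \<Rightarrow> nat \<Rightarrow> nat" where "path_vertex i j k \<equiv> 12 * i + 4 * j + k"

definition path_prev :: "nat \<Rightarrow> nat" where
  "path_prev v = (if v mod 4 = 0 then pole_a (v div 12) else v - 1)"

definition path_next :: "nat \<Rightarrow> nat" where
  "path_next v = (if v mod 4 = 3 then pole_b (v div 12) else v + 1)"

definition bundle_nbrs :: "nat \<Rightarrow> nat list" where
  "bundle_nbrs v =
    (if v < 108 then [path_prev v, path_next v]
     else if v = hub_a then map pole_a [0..<9]
     else if v = hub_b then map pole_b [0..<9]
     else if v < 119 then hub_a # pole_b (v - 110) # map (\<lambda>j. path_vertex (v - 110) j 0) [0..<3]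
     else if v < 128 then hub_b # pole_a (v - 119) # map (\<lambda>j. path_vertex (v - 119) j 3) [0..<3]
     else [])"

definition bundle_adj :: "nat \<Rightarrow> nat \<Rightarrow> bool" where
  "bundle_adj u v \<longleftrightarrow> v \<in> set (bundle_nbrs u)"

lemma bundle_symmetry_check:
  "list_all (\<lambda>u. list_all (\<lambda>v. v < 128 \<and> v \<noteq> u \<and> u \<in> set (bundle_nbrs v)) (bundle_nbrs u)) [0..<128]"
  by code_simp

lemma bundle_adj_less: "bundle_adj u v \<Longrightarrow> u < 128"
  by (rule ccontr) (simp add: bundle_adj_def bundle_nbrs_def)

lemma bundle_adj_sym: "bundle_adj u v \<Longrightarrow> v < 128 \<and> v \<noteq> u \<and> bundle_adj v u"
  using list_all_uptD[OF bundle_symmetry_check bundle_adj_less] unfolding bundle_adj_def list_all_iff by blast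

lemma bundle_simple_graph: "simple_graph {..<128} bundle_adj"
  unfolding simple_graph_def using bundle_adj_less bundle_adj_sym by blast

definition bundle_colour :: "nat \<Rightarrow> bool" where
  "bundle_colour v \<longleftrightarrow> (if v < 108 then odd v else v = hub_b \<or> (110 \<le> v \<and> v < 119))"

lemma bundle_colour_check:
  "list_all (\<lambda>u. list_all (\<lambda>v. bundle_colour u \<noteq> bundle_colour v) (bundle_nbrs u)) [0..<128]"
  by code_simp

lemma bundle_square_check:
  "list_all (\<lambda>x. list_all (\<lambda>w. list_all (\<lambda>y. w = y \<or>
      list_all (\<lambda>z. z \<in> set (bundle_nbrs y) \<longrightarrow> z = x) (bundle_nbrs w)) (bundle_nbrs x)) (bundle_nbrs x))
    [0..<128]"
  by code_simp

lemma bundle_adj_colour: "bundle_adj u v \<Longrightarrow> bundle_colour u \<noteq> bundle_colour v"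
  using list_all_uptD[OF bundle_colour_check bundle_adj_less] unfolding bundle_adj_def list_all_iff by blast

lemma bundle_no_square:
  assumes "bundle_adj w x" "bundle_adj x y" "bundle_adj y z" "bundle_adj z w"
  shows "w = y \<or> x = z"
proof -
  have "w \<in> set (bundle_nbrs x)" "y \<in> set (bundle_nbrs x)" "z \<in> set (bundle_nbrs w)" "z \<in> set (bundle_nbrs y)"
    using assms bundle_adj_sym unfolding bundle_adj_def by blast+
  moreover have "x < 128" using bundle_adj_less assms(2) .
  ultimately show ?thesis
    using list_all_uptD[OF bundle_square_check] unfolding list_all_iff by blast
qed

lemma bundle_girth: "has_girth bundle_adj 6"
  unfolding has_girth_def
proof (intro conjI allI impI)
  let ?cs = "[hub_a, pole_a 0, pole_b 0, hub_b, pole_b 1, pole_a 1]"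
  have "bundle_adj (?cs ! i) (?cs ! ((i + 1) mod 6))" if "i < 6" for i
  proof -
    have "i = 0 \<or> i = 1 \<or> i = 2 \<or> i = 3 \<or> i = 4 \<or> i = 5" using that by linarith
    then show ?thesis by (elim disjE) (simp_all add: bundle_adj_def bundle_nbrs_def)
  qed
  then have "is_cycle bundle_adj ?cs" unfolding is_cycle_def by simp
  then show "\<exists>cs. is_cycle bundle_adj cs \<and> length cs = 6" by (intro exI[of _ ?cs]) simp
next
  fix cs assume "is_cycle bundle_adj cs"
  then show "6 \<le> length cs" using cycle_length_ge_6 bundle_adj_colour bundle_no_square by blast
qed

definition theta_index :: "nat \<Rightarrow> nat" where
  "theta_index v = (if v < 108 then v div 12 else if v < 119 then v - 110 else v - 119)"

definition theta :: "nat \<Rightarrow> nat set" where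
  "theta i = {v. v < 128 \<and> v \<noteq> hub_a \<and> v \<noteq> hub_b \<and> theta_index v = i}"

lemma bundle_theta_index_check:
  "list_all (\<lambda>u. list_all (\<lambda>v. u = hub_a \<or> u = hub_b \<or> v = hub_a \<or> v = hub_b \<or>
      theta_index u = theta_index v) (bundle_nbrs u)) [0..<128]"
  by code_simp

lemma bundle_adj_theta_index:
  "bundle_adj u v \<Longrightarrow> u \<notin> {hub_a, hub_b} \<Longrightarrow> v \<notin> {hub_a, hub_b} \<Longrightarrow> theta_index u = theta_index v"
  using list_all_uptD[OF bundle_theta_index_check bundle_adj_less] unfolding bundle_adj_def list_all_iff by blast

lemma adjacent_thetas_eq: "bundle_adj u v \<Longrightarrow> u \<in> theta i \<Longrightarrow> v \<in> theta i' \<Longrightarrow> i = i'"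
  using bundle_adj_theta_index unfolding theta_def by auto

lemma bundle_adj_enter_theta:
  assumes "bundle_adj u v" "u \<notin> theta i" "v \<in> theta i"
  shows "(u = hub_a \<and> v = pole_a i) \<or> (u = hub_b \<and> v = pole_b i)"
proof -
  have "u \<in> {hub_a, hub_b}"
    using assms bundle_adj_less[OF assms(1)] bundle_adj_theta_index[OF assms(1)] unfolding theta_def by auto
  then show ?thesis
    using assms(1,3) by (auto simp: bundle_adj_def bundle_nbrs_def theta_def theta_index_def)
qed

lemma theta_non_path_vertex: "v \<in> theta i \<Longrightarrow> 108 \<le> v \<Longrightarrow> v = pole_a i \<or> v = pole_b i"
  unfolding theta_def theta_index_def by auto

lemma hub_free_connected_set_in_theta:
  assumes C: "connected_set bundle_adj C" and "C \<subseteq> {..<128}" "hub_a \<notin> C" "hub_b \<notin> C"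
  obtains i where "C \<subseteq> theta i"
proof -
  obtain x where "x \<in> C" using connected_set_nonempty[OF C] by blast
  then have "x \<in> theta (theta_index x)" using assms unfolding theta_def by auto
  moreover have "v \<notin> C" if "bundle_adj u v" "u \<notin> - theta (theta_index x)" "v \<in> - theta (theta_index x)" for u v
    using bundle_adj_enter_theta[of v u] bundle_adj_sym[OF that(1)] that assms(3,4) by auto
  ultimately have "C \<inter> - theta (theta_index x) = {}"
    using connected_set_disjoint[OF C \<open>x \<in> C\<close>] by blast
  then show thesis using that by blast
qed

lemma bundle_adj_path_vertex: "u < 108 \<Longrightarrow> bundle_adj u v \<longleftrightarrow> v = path_prev u \<or> v = path_next u"
  by (auto simp: bundle_adj_def bundle_nbrs_def)

lemma bundle_path_steps_check:
  "list_all (\<lambda>u. list_all (\<lambda>v. v < 108 \<longrightarrow> v div 4 = u div 4 \<and> (v = Suc u \<or> u = Suc v))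
      (bundle_nbrs u)) [0..<108]"
  by code_simp

lemma path_step:
  assumes "u < 108" "v < 108" "bundle_adj u v"
  shows "v div 4 = u div 4 \<and> (v = Suc u \<or> u = Suc v)"
  using list_all_uptD[OF bundle_path_steps_check \<open>u < 108\<close>] assms(2,3)
  unfolding bundle_adj_def list_all_iff by blast

lemma path_segment_interval:
  assumes C: "connected_set bundle_adj C" and paths: "C \<subseteq> {..<108}" and "x \<in> C" "y \<in> C"
  shows "y div 4 = x div 4 \<and> {min x y..max x y} \<subseteq> C"
proof -
  from C \<open>x \<in> C\<close> \<open>y \<in> C\<close> have "(\<lambda>u v. bundle_adj u v \<and> u \<in> C \<and> v \<in> C)\<^sup>*\<^sup>* x y"
    unfolding connected_set_def by blast
  then show ?thesis
  proof (induction rule: rtranclp_induct)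
    case base
    then show ?case using \<open>x \<in> C\<close> by simp
  next
    case (step y z)
    then have "z div 4 = y div 4" "z = Suc y \<or> y = Suc z" using path_step paths by blast+
    moreover have "{min x z..max x z} \<subseteq> insert z {min x y..max x y}"
      using \<open>z = Suc y \<or> y = Suc z\<close> by auto
    ultimately show ?case using step by auto
  qed
qed

lemma path_segment_exits:
  assumes C: "connected_set bundle_adj C" and paths: "C \<subseteq> {..<108}"
    and "u \<in> C" "bundle_adj u w" "w \<notin> C"
  shows "w = path_prev (Min C) \<or> w = path_next (Max C)"
proof -
  have "finite C" "C \<noteq> {}" using paths finite_subset \<open>u \<in> C\<close> by auto
  then have "Min C \<in> C" "Max C \<in> C" "Min C \<le> u" "u \<le> Max C" using \<open>u \<in> C\<close> by simp_all
  have "u < 108" using paths \<open>u \<in> C\<close> by blast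
  then consider "w = path_prev u" | "w = path_next u" using \<open>bundle_adj u w\<close> bundle_adj_path_vertex by blast
  then show ?thesis
  proof cases
    case 1
    have "u = Min C"
    proof (rule ccontr)
      assume "u \<noteq> Min C"
      with \<open>Min C \<le> u\<close> have "Min C < u" by simp
      from path_segment_interval[OF C paths \<open>Min C \<in> C\<close> \<open>u \<in> C\<close>]
      have "u div 4 = Min C div 4" "u - 1 \<in> C" using \<open>Min C < u\<close> by (auto simp: subset_eq)
      moreover from this(1) have "u mod 4 \<noteq> 0"
        using \<open>Min C < u\<close> div_mult_mod_eq[of u 4] div_mult_mod_eq[of "Min C" 4] by linarith
      ultimately show False using 1 \<open>w \<notin> C\<close> unfolding path_prev_def by simp
    qed
    then show ?thesis using 1 by simp
  next
    case 2
    have "u = Max C"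
    proof (rule ccontr)
      assume "u \<noteq> Max C"
      with \<open>u \<le> Max C\<close> have "u < Max C" by simp
      from path_segment_interval[OF C paths \<open>u \<in> C\<close> \<open>Max C \<in> C\<close>]
      have "Max C div 4 = u div 4" "u + 1 \<in> C" using \<open>u < Max C\<close> by (auto simp: subset_eq)
      moreover from this(1) have "u mod 4 \<noteq> 3"
        using \<open>u < Max C\<close> div_mult_mod_eq[of u 4] div_mult_mod_eq[of "Max C" 4]
          mod_less_divisor[of 4 "Max C"] by linarith
      ultimately show False using 2 \<open>w \<notin> C\<close> unfolding path_next_def by simp
    qed
    then show ?thesis using 2 by simp
  qed
qed

lemma branch_set_leaves_paths:
  assumes C: "connected_set bundle_adj C"
    and "D1 \<inter> C = {}" "D2 \<inter> C = {}" "D3 \<inter> C = {}" "D1 \<inter> D2 = {}" "D1 \<inter> D3 = {}" "D2 \<inter> D3 = {}"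
    and "\<exists>u\<in>C. \<exists>v\<in>D1. bundle_adj u v" "\<exists>u\<in>C. \<exists>v\<in>D2. bundle_adj u v" "\<exists>u\<in>C. \<exists>v\<in>D3. bundle_adj u v"
  shows "\<exists>c\<in>C. 108 \<le> c"
proof (rule ccontr)
  assume "\<not> (\<exists>c\<in>C. 108 \<le> c)"
  then have paths: "C \<subseteq> {..<108}" by auto
  \<comment> \<open>a connected set of inner vertices is a subpath, which has only two outside neighbours\<close>
  have exits: "v \<in> {path_prev (Min C), path_next (Max C)}" if "u \<in> C" "bundle_adj u v" "v \<notin> C" for u v
    using path_segment_exits[OF C paths that] by blast
  obtain u1 w1 u2 w2 u3 w3 where "u1 \<in> C" "w1 \<in> D1" "bundle_adj u1 w1"
    and "u2 \<in> C" "w2 \<in> D2" "bundle_adj u2 w2" and "u3 \<in> C" "w3 \<in> D3" "bundle_adj u3 w3"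
    using assms(8-10) by blast
  moreover have "w1 \<notin> C" "w2 \<notin> C" "w3 \<notin> C" "w1 \<noteq> w2" "w1 \<noteq> w3" "w2 \<noteq> w3"
    using calculation assms(2-7) by blast+
  ultimately show False using exits by (metis insertE singletonD)
qed

lemma one_hub_set_enters_at_pole_a:
  assumes C: "connected_set bundle_adj C" and "hub_a \<in> C" "hub_b \<notin> C" "pole_a i \<notin> C" "pole_b i \<notin> C"
    and "D \<subseteq> theta i" and "\<exists>u\<in>C. \<exists>v\<in>D. bundle_adj u v"
  shows "pole_a i \<in> D"
proof -
  \<comment> \<open>the only entrances to theta i are its poles\<close>
  have "C \<inter> theta i = {}"
  proof (rule connected_set_disjoint[OF C \<open>hub_a \<in> C\<close>])
    show "hub_a \<notin> theta i" unfolding theta_def by simp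
    show "v \<notin> C" if "bundle_adj u v" "u \<notin> theta i" "v \<in> theta i" for u v
      using bundle_adj_enter_theta[OF that] assms(4,5) by blast
  qed
  moreover obtain u v where "u \<in> C" "v \<in> D" "bundle_adj u v" using assms(7) by blast
  ultimately show ?thesis
    using bundle_adj_enter_theta[of u v i] \<open>D \<subseteq> theta i\<close> \<open>hub_b \<notin> C\<close> by blast
qed

lemma hub_free_branch_sets_impossible:
  fixes B :: "nat \<Rightarrow> nat set"
  assumes sub: "\<And>m. m < 4 \<Longrightarrow> B m \<subseteq> {..<128}"
    and conn: "\<And>m. m < 4 \<Longrightarrow> connected_set bundle_adj (B m)"
    and disj: "\<And>m m'. m < 4 \<Longrightarrow> m' < 4 \<Longrightarrow> m \<noteq> m' \<Longrightarrow> B m \<inter> B m' = {}"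
    and adj: "\<And>m m'. m < 4 \<Longrightarrow> m' < 4 \<Longrightarrow> m \<noteq> m' \<Longrightarrow> \<exists>u\<in>B m. \<exists>v\<in>B m'. bundle_adj u v"
    and big: "\<And>m. m < 4 \<Longrightarrow> \<exists>c\<in>B m. 108 \<le> c"
    and k: "k < 4" "k' < 4" "k \<noteq> k'" and hub_free: "{hub_a, hub_b} \<inter> (B k \<union> B k') = {}"
  shows False
proof -
  have in_theta: "\<exists>i. B n \<subseteq> theta i" if "n < 4" "hub_a \<notin> B n" "hub_b \<notin> B n" for n
    using hub_free_connected_set_in_theta[OF conn sub] that by metis
  have same_theta: "i = i'" if "n < 4" "n' < 4" "n \<noteq> n'" "B n \<subseteq> theta i" "B n' \<subseteq> theta i'" for n n' i i'
    using adj[OF that(1-3)] adjacent_thetas_eq that(4,5) by blast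
  obtain i where "B k \<subseteq> theta i" using in_theta k(1) hub_free by blast
  obtain i' where "B k' \<subseteq> theta i'" using in_theta k(2) hub_free by blast
  have "i' = i" using same_theta[OF k(2,1)] k(3) \<open>B k \<subseteq> theta i\<close> \<open>B k' \<subseteq> theta i'\<close> by metis
  have big_pole: "\<exists>c\<in>B n. c = pole_a i \<or> c = pole_b i" if "n < 4" "B n \<subseteq> theta i" for n
    using big[OF that(1)] that(2) theta_non_path_vertex by blast
  have poles: "pole_a i \<in> B k \<union> B k'" "pole_b i \<in> B k \<union> B k'"
    using big_pole[OF k(1) \<open>B k \<subseteq> theta i\<close>] big_pole[OF k(2)] \<open>B k' \<subseteq> theta i'\<close> \<open>i' = i\<close>
      disj[OF k] by blast+
  have hub_owner: "hub_a \<in> B m \<or> hub_b \<in> B m" if hm: "m < 4" "m \<noteq> k" "m \<noteq> k'" for m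
  proof (rule ccontr)
    assume "\<not> (hub_a \<in> B m \<or> hub_b \<in> B m)"
    then obtain i'' where "B m \<subseteq> theta i''" using in_theta hm(1) by blast
    moreover have "i'' = i" using same_theta[OF hm(1) k(1) hm(2)] calculation \<open>B k \<subseteq> theta i\<close> .
    ultimately obtain c where "c \<in> B m" "c \<in> B k \<union> B k'" using big_pole[OF hm(1)] poles by blast
    then show False using disj[OF hm(1) k(1) hm(2)] disj[OF hm(1) k(2) hm(3)] by blast
  qed
  obtain m where m: "m < 4" "m \<noteq> k" "m \<noteq> k'" and "hub_a \<in> B m" "hub_b \<notin> B m"
  proof -
    have "finite {k, k'}" "card {k, k'} + 2 \<le> 4" by (simp_all add: card_insert_if)
    then obtain T where "T \<subseteq> {..<4} - {k, k'}" "card T = 2" by (rule obtain_indices_outside)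
    then obtain m0 m1 where "m0 < 4" "m1 < 4" "m0 \<noteq> m1" "m0 \<notin> {k, k'}" "m1 \<notin> {k, k'}"
      unfolding card_2_iff by blast
    then show thesis using that hub_owner disj by blast
  qed
  have "pole_a i \<in> B n" if hn: "n < 4" "n \<noteq> m" "B n \<subseteq> theta i" for n
  proof (rule one_hub_set_enters_at_pole_a[OF conn[OF m(1)] \<open>hub_a \<in> B m\<close> \<open>hub_b \<notin> B m\<close> _ _ hn(3)])
    show "pole_a i \<notin> B m" "pole_b i \<notin> B m"
      using poles disj[OF m(1) k(1) m(2)] disj[OF m(1) k(2) m(3)] by blast+
    show "\<exists>u\<in>B m. \<exists>v\<in>B n. bundle_adj u v" using adj[OF m(1) hn(1)] hn(2) by metis
  qed
  then have "pole_a i \<in> B k" "pole_a i \<in> B k'"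
    using k m \<open>B k \<subseteq> theta i\<close> \<open>B k' \<subseteq> theta i'\<close> \<open>i' = i\<close> by auto
  then show False using disj[OF k] by blast
qed

lemma bundle_no_K4_minor: "\<not> has_K4_minor {..<128} bundle_adj"
proof
  assume "has_K4_minor {..<128} bundle_adj"
  then obtain B :: "nat \<Rightarrow> nat set"
    where branch: "\<forall>m<4. B m \<subseteq> {..<128} \<and> connected_set bundle_adj (B m)"
      and pairs: "\<forall>m<4. \<forall>m'<4. m \<noteq> m' \<longrightarrow> B m \<inter> B m' = {} \<and> (\<exists>u\<in>B m. \<exists>v\<in>B m'. bundle_adj u v)"
    unfolding has_K4_minor_def by blast
  have sub: "\<And>m. m < 4 \<Longrightarrow> B m \<subseteq> {..<128}"
    and conn: "\<And>m. m < 4 \<Longrightarrow> connected_set bundle_adj (B m)"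
    and disj: "\<And>m m'. m < 4 \<Longrightarrow> m' < 4 \<Longrightarrow> m \<noteq> m' \<Longrightarrow> B m \<inter> B m' = {}"
    and adj: "\<And>m m'. m < 4 \<Longrightarrow> m' < 4 \<Longrightarrow> m \<noteq> m' \<Longrightarrow> \<exists>u\<in>B m. \<exists>v\<in>B m'. bundle_adj u v"
    using branch pairs by blast+
  have big: "\<exists>c\<in>B m. 108 \<le> c" if "m < 4" for m
  proof -
    have "finite {m}" "card {m} + 3 \<le> 4" by simp_all
    then obtain T where "T \<subseteq> {..<4} - {m}" "card T = 3" by (rule obtain_indices_outside)
    then obtain x y z where "x < 4" "y < 4" "z < 4" "distinct [m, x, y, z]"
      unfolding card_3_iff by auto
    then show ?thesis
      using branch_set_leaves_paths[OF conn[OF that], of "B x" "B y" "B z"] disj adj that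
      by (simp add: Int_commute)
  qed
  have owner: "\<exists>m0. \<forall>m<4. h \<in> B m \<longrightarrow> m = m0" for h
    using disj by blast
  then obtain ma mb where ma: "\<forall>m<4. hub_a \<in> B m \<longrightarrow> m = ma"
    and mb: "\<forall>m<4. hub_b \<in> B m \<longrightarrow> m = mb"
    by metis
  have "finite {ma, mb}" "card {ma, mb} + 2 \<le> 4" by (simp_all add: card_insert_if)
  then obtain T where "T \<subseteq> {..<4} - {ma, mb}" "card T = 2" by (rule obtain_indices_outside)
  then obtain k k' where k: "k < 4" "k' < 4" "k \<noteq> k'" and "k \<notin> {ma, mb}" "k' \<notin> {ma, mb}"
    unfolding card_2_iff by blast
  then have "{hub_a, hub_b} \<inter> (B k \<union> B k') = {}" using ma mb by blast
  from hub_free_branch_sets_impossible[OF sub conn disj adj big k this] show False .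
qed

lemma bundle_theta_paths_check:
  "list_all (\<lambda>i. list_all (\<lambda>j.
      bundle_adj (pole_a i) (path_vertex i j 0) \<and> bundle_adj (path_vertex i j 0) (path_vertex i j 1) \<and>
      bundle_adj (path_vertex i j 1) (path_vertex i j 2) \<and> bundle_adj (path_vertex i j 2) (path_vertex i j 3) \<and>
      bundle_adj (path_vertex i j 3) (pole_b i)) [0..<3]) [0..<9]"
  unfolding bundle_adj_def by code_simp

lemma bundle_hanging_theta:
  assumes "i < 9"
  shows "hanging_theta bundle_adj hub_a hub_b (pole_a i) (pole_b i) (path_vertex i)"
proof -
  have inj: "j = j' \<and> k = k'"
    if "k < 4" "k' < 4" "path_vertex i j k = path_vertex i j' k'" for j k j' k'
  proof -
    have "4 * j + k = 4 * j' + k'" using that(3) by simp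
    then have "(4 * j + k) div 4 = (4 * j' + k') div 4" "(4 * j + k) mod 4 = (4 * j' + k') mod 4"
      by simp_all
    then show ?thesis using that(1,2) by simp
  qed
  have "bundle_adj hub_a (pole_a i)" "bundle_adj hub_b (pole_b i)" "bundle_adj (pole_a i) (pole_b i)"
    using assms by (simp_all add: bundle_adj_def bundle_nbrs_def)
  moreover have "\<forall>j<3. \<forall>k<4. \<forall>j'<3. \<forall>k'<4. path_vertex i j k = path_vertex i j' k' \<longrightarrow> j = j' \<and> k = k'"
    using inj by blast
  moreover have "\<forall>j<3. \<forall>k<4. path_vertex i j k \<notin> {hub_a, hub_b, pole_a i, pole_b i}"
    using assms by auto
  moreover have "\<forall>j<3. bundle_adj (pole_a i) (path_vertex i j 0) \<and>
      bundle_adj (path_vertex i j 0) (path_vertex i j 1) \<and> bundle_adj (path_vertex i j 1) (path_vertex i j 2) \<and>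
      bundle_adj (path_vertex i j 2) (path_vertex i j 3) \<and> bundle_adj (path_vertex i j 3) (pole_b i)"
    using list_all_uptD[OF list_all_uptD[OF bundle_theta_paths_check assms]] by blast
  ultimately show ?thesis unfolding hanging_theta_def by simp
qed

lemma bundle_not_in_2CBU: "\<not> in_2CBU {..<128} bundle_adj"
proof
  assume "in_2CBU {..<128} bundle_adj"
  with bundle_simple_graph obtain x0 x1 where L: "x_contact_layout {..<128} bundle_adj x0 x1"
    by (rule in_2CBU_x_contact_layout)
  define non_passing where "non_passing u = {v. bundle_adj u v \<and>
      \<not> passes_right bundle_adj x0 x1 u v \<and> \<not> passes_left bundle_adj x0 x1 u v}" for u
  have few: "card {i. i < 9 \<and> f i \<in> non_passing u} \<le> 4" if "inj f" for f u
  proof -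
    have "non_passing u \<subseteq> {..<128}" unfolding non_passing_def using bundle_adj_sym by auto
    then have "finite (non_passing u)" by (rule finite_subset) simp
    then have "card {i. i < 9 \<and> f i \<in> non_passing u} \<le> card (non_passing u)"
      using that by (intro card_inj_on_le) (auto intro: inj_on_subset)
    also have "\<dots> \<le> 4" unfolding non_passing_def by (rule non_passing_neighbours_card[OF bundle_simple_graph L])
    finally show ?thesis .
  qed
  obtain i where "i < 9" "pole_a i \<notin> non_passing hub_a" "pole_b i \<notin> non_passing hub_b"
    using exists_outside_two_small_sets[of 9 "\<lambda>i. pole_a i \<in> non_passing hub_a" "\<lambda>i. pole_b i \<in> non_passing hub_b"]
      few[of pole_a hub_a] few[of pole_b hub_b] by (auto simp: inj_def)
  moreover have "bundle_adj hub_a (pole_a i)" "bundle_adj hub_b (pole_b i)"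
    using \<open>i < 9\<close> by (simp_all add: bundle_adj_def bundle_nbrs_def)
  ultimately show False
    using hanging_theta_pass_impossible[OF bundle_simple_graph L bundle_hanging_theta[OF \<open>i < 9\<close>]]
    unfolding non_passing_def by blast
qed

theorem mainTheorem4:
  shows "\<exists>(V :: nat set) E. series_parallel V E \<and> has_girth E 6 \<and> \<not> in_2CBU V E"
  using bundle_simple_graph bundle_no_K4_minor bundle_girth bundle_not_in_2CBU
  unfolding series_parallel_def by blast

end
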